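(* Let $\Lambda=\{\lambda_n,\mu_n\}_{n=1}^{\infty}$ belong to the class $ABC$, let $-\infty<\gamma<\beta<\infty$, and let $r_\Lambda=\{r_{n,k}\}$ be the unique family biorthogonal to $E_\Lambda$ in $L^2(\gamma,\beta)$ that is contained in the closed span of $E_\Lambda$ in $L^2(\gamma,\beta)$. Let $f$ be an entire function admitting a Taylor–Dirichlet series representation $f(z)=\sum_{n}\big(\sum_{k=0}^{\mu_n-1}c_{n,k}z^k\big)e^{\lambda_n z}$ valid in the whole complex plane. Then for every non-negative integer $m$, \[ f^{(m)}(z)=\sum_{n=1}^{\infty}\Big(\sum_{k=0}^{\mu_n-1}\langle f^{(m)},r_{n,k}\rangle z^k\Big)e^{\lambda_n z}\qquad\text{for all } z\in\mathbb{C}. \]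
   Context: A multiplicity sequence $\Lambda=\{\lambda_n,\mu_n\}_{n=1}^\infty$ consists of distinct nonzero complex numbers $\lambda_n$ with $|\lambda_n|\to\infty$, $|\lambda_n|\le|\lambda_{n+1}|$, and positive integers $\mu_n$. $A^0_{|z|}$ is the space of entire functions $F$ with: for every $\epsilon>0$ there is $M_\epsilon$ with $|F(z)|\le M_\epsilon e^{\epsilon|z|}$ on $\mathbb{C}$. $\Lambda$ is an interpolating variety for $A^0_{|z|}$ if for every doubly indexed complex sequence $(a_{n,k})_{n\in\mathbb{N},0\le k\le\mu_n-1}$ with $\sup_n\sum_{k}|a_{n,k}|e^{-\epsilon|\lambda_n|}<\infty$ for every $\epsilon>0$ there is $f\in A^0_{|z|}$ with $f^{(k)}(\lambda_n)/k!=a_{n,k}$ for all $n,k$. $\Lambda\in ABC$ means: (A) $\sum_n\mu_n/|\lambda_n|<\infty$; (B) $\sup_n|\arg\lambda_n|<\pi/2$; (C) $\Lambda$ is an interpolating variety for $A^0_{|z|}$. $E_\Lambda=\{e_{n,k}(x)=x^ke^{\lambda_n x}\}$. $\langle f,g\rangle=\int_\gamma^\beta f\overline g\,dx$ (functions restricted to $(\gamma,\beta)$). Biorthogonal means $\langle r_{n,k},e_{j,l}\rangle=1$ if $(j,l)=(n,k)$ and $0$ otherwise. *)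

theory Defs
  imports "HOL-Complex_Analysis.Complex_Analysis"
begin

text \<open>Multiplicity sequences are indexed from 0 instead of 1.\<close>

definition multiplicity_seq :: "(nat \<Rightarrow> complex) \<Rightarrow> (nat \<Rightarrow> nat) \<Rightarrow> bool" where
  "multiplicity_seq lam mu \<longleftrightarrow>
     inj lam \<and> (\<forall>n. lam n \<noteq> 0) \<and>
     filterlim (\<lambda>n. norm (lam n)) at_top sequentially \<and>
     (\<forall>n. norm (lam n) \<le> norm (lam (Suc n))) \<and>
     (\<forall>n. mu n \<ge> 1)"

definition A0 :: "(complex \<Rightarrow> complex) set" where
  "A0 = {F. F holomorphic_on UNIV \<and>
            (\<forall>\<epsilon>>0. \<exists>M. \<forall>z. norm (F z) \<le> M * exp (\<epsilon> * norm z))}"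

definition interpolating_variety_A0 :: "(nat \<Rightarrow> complex) \<Rightarrow> (nat \<Rightarrow> nat) \<Rightarrow> bool" where
  "interpolating_variety_A0 lam mu \<longleftrightarrow>
     (\<forall>a :: nat \<Rightarrow> nat \<Rightarrow> complex.
        (\<forall>\<epsilon>>0. bdd_above (range (\<lambda>n. (\<Sum>k<mu n. norm (a n k)) * exp (- \<epsilon> * norm (lam n)))))
        \<longrightarrow> (\<exists>F\<in>A0. \<forall>n k. k < mu n \<longrightarrow> (deriv ^^ k) F (lam n) / of_nat (fact k) = a n k))"

definition class_ABC :: "(nat \<Rightarrow> complex) \<Rightarrow> (nat \<Rightarrow> nat) \<Rightarrow> bool" where
  "class_ABC lam mu \<longleftrightarrow>
     multiplicity_seq lam mu \<and>
     summable (\<lambda>n. real (mu n) / norm (lam n)) \<and>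
     (\<exists>\<theta> < pi / 2. \<forall>n. \<bar>Arg (lam n)\<bar> \<le> \<theta>) \<and>
     interpolating_variety_A0 lam mu"

definition exp_monomial :: "(nat \<Rightarrow> complex) \<Rightarrow> nat \<Rightarrow> nat \<Rightarrow> real \<Rightarrow> complex" where
  "exp_monomial lam n k x = (complex_of_real x) ^ k * exp (lam n * complex_of_real x)"

definition L2_inner :: "real \<Rightarrow> real \<Rightarrow> (real \<Rightarrow> complex) \<Rightarrow> (real \<Rightarrow> complex) \<Rightarrow> complex" where
  "L2_inner \<gamma> \<beta> f g = integral {\<gamma>..\<beta>} (\<lambda>x. f x * cnj (g x))"

definition in_L2 :: "real \<Rightarrow> real \<Rightarrow> (real \<Rightarrow> complex) \<Rightarrow> bool" where
  "in_L2 \<gamma> \<beta> f \<longleftrightarrow> f measurable_on {\<gamma>..\<beta>} \<and> (\<lambda>x. (norm (f x))^2) integrable_on {\<gamma>..\<beta>}"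

definition in_closed_span_E :: "real \<Rightarrow> real \<Rightarrow> (nat \<Rightarrow> complex) \<Rightarrow> (nat \<Rightarrow> nat) \<Rightarrow> (real \<Rightarrow> complex) \<Rightarrow> bool" where
  "in_closed_span_E \<gamma> \<beta> lam mu g \<longleftrightarrow>
     in_L2 \<gamma> \<beta> g \<and>
     (\<forall>\<epsilon>>0. \<exists>S c. finite S \<and> S \<subseteq> {(n, k). k < mu n} \<and>
        integral {\<gamma>..\<beta>} (\<lambda>x. (norm (g x - (\<Sum>(n, k)\<in>S. c n k * exp_monomial lam n k x)))^2) < \<epsilon>)"

definition biorthogonal_to_E :: "real \<Rightarrow> real \<Rightarrow> (nat \<Rightarrow> complex) \<Rightarrow> (nat \<Rightarrow> nat) \<Rightarrow> (nat \<Rightarrow> nat \<Rightarrow> real \<Rightarrow> complex) \<Rightarrow> bool" where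
  "biorthogonal_to_E \<gamma> \<beta> lam mu r \<longleftrightarrow>
     (\<forall>n k j l. k < mu n \<longrightarrow> l < mu j \<longrightarrow>
        L2_inner \<gamma> \<beta> (r n k) (exp_monomial lam j l) = (if (j, l) = (n, k) then 1 else 0))"

end

theory Submission
  imports Defs
begin

(* Write the n-th term as g_n(z) = P_n(z) e^(lam_n z) with deg P_n < mu_n. Convergence everywhere
   makes the g_n pointwise bounded, so by Baire they are uniformly bounded, say by M, on a small disc
   near the real point x0 = (rho + 3) / cos theta. By the sector condition (B), Re (lam_n z) >=
   (rho + 2) |lam_n| on that disc, so |P_n| <= M e^(-(rho + 2) |lam_n|) on a circle in it, and Cauchy's
   estimates give |g_n(z)| <= M mu_n T^mu_n e^(-2 |lam_n|) for |z| <= rho. As mu_n / |lam_n| -> 0 by (A),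
   this is eventually at most M mu_n / |lam_n|, a summable majorant. Hence the series converges normally
   on compact sets: it may be differentiated termwise, giving a series of the same shape for f', and
   integrated termwise against r_{n,k}, where biorthogonality isolates the coefficient of x^k e^(lam_n x). *)

definition polysum :: "nat \<Rightarrow> (nat \<Rightarrow> complex) \<Rightarrow> complex \<Rightarrow> complex" where
  "polysum N b z = (\<Sum>k<N. b k * z ^ k)"

lemma polysum_0 [simp]: "polysum 0 b z = 0"
  by (simp add: polysum_def)

lemma polysum_Suc: "polysum (Suc N) b z = polysum N b z + b N * z ^ N"
  by (simp add: polysum_def)

lemma has_field_derivative_polysum:
  "(polysum N b has_field_derivative polysum (N - 1) (\<lambda>k. of_nat (Suc k) * b (Suc k)) z) (at z)"
proof (induction N)
  case 0
  then show ?case by (simp add: polysum_def[abs_def])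
next
  case (Suc N)
  have "(polysum (Suc N) b has_field_derivative
      polysum (N - 1) (\<lambda>k. of_nat (Suc k) * b (Suc k)) z + b N * (of_nat N * z ^ (N - 1))) (at z)"
    unfolding polysum_Suc[abs_def] using Suc by (auto intro!: derivative_eq_intros)
  moreover have "polysum (N - 1) (\<lambda>k. of_nat (Suc k) * b (Suc k)) z + b N * (of_nat N * z ^ (N - 1))
      = polysum N (\<lambda>k. of_nat (Suc k) * b (Suc k)) z"
    by (cases N) (simp_all add: polysum_Suc algebra_simps)
  ultimately show ?case by simp
qed

lemma deriv_polysum: "deriv (polysum N b) = polysum (N - 1) (\<lambda>k. of_nat (Suc k) * b (Suc k))"
  using has_field_derivative_polysum DERIV_imp_deriv by blast

lemma higher_deriv_polysum: "\<exists>b'. (deriv ^^ j) (polysum N b) = polysum (N - j) b'"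
proof (induction j)
  case (Suc j)
  then obtain b' where "(deriv ^^ j) (polysum N b) = polysum (N - j) b'" by blast
  then have "(deriv ^^ Suc j) (polysum N b) = polysum (N - j - 1) (\<lambda>k. of_nat (Suc k) * b' (Suc k))"
    by (simp only: funpow.simps o_apply deriv_polysum)
  then show ?case by auto
qed auto

lemma higher_deriv_polysum_eq_0: "N \<le> j \<Longrightarrow> (deriv ^^ j) (polysum N b) z = 0"
  using higher_deriv_polysum[of j N b] by auto

lemma holomorphic_on_polysum: "polysum N b holomorphic_on S"
  unfolding polysum_def[abs_def] by (intro holomorphic_intros)

lemma polysum_Taylor:
  "polysum N b z = (\<Sum>j<N. (deriv ^^ j) (polysum N b) w / fact j * (z - w) ^ j)"
proof -
  have "(\<lambda>j. (deriv ^^ j) (polysum N b) w / fact j * (z - w) ^ j) sums polysum N b z"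
    by (rule holomorphic_power_series[where r = "norm (z - w) + 1"])
      (auto simp: holomorphic_on_polysum dist_norm norm_minus_commute)
  moreover have "(\<lambda>j. (deriv ^^ j) (polysum N b) w / fact j * (z - w) ^ j)
      sums (\<Sum>j<N. (deriv ^^ j) (polysum N b) w / fact j * (z - w) ^ j)"
    by (rule sums_finite) (simp_all add: higher_deriv_polysum_eq_0)
  ultimately show ?thesis using sums_unique2 by blast
qed

(* Cauchy's estimates at w bound the coefficients of the Taylor expansion about w. *)
lemma norm_polysum_le_circle_bound:
  assumes r: "0 < r" and B: "\<And>\<zeta>. norm (\<zeta> - w) = r \<Longrightarrow> norm (polysum N b \<zeta>) \<le> B"
  shows "norm (polysum N b z) \<le> real N * B * (1 + norm (z - w) / r) ^ N"
proof -
  define T where "T = 1 + norm (z - w) / r"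
  have "T \<ge> 1" using r by (simp add: T_def)
  obtain \<zeta> where "norm (\<zeta> - w) = r"
    using vector_choose_dist[of r w] r by (auto simp: dist_norm norm_minus_commute)
  then have B0: "B \<ge> 0" using B[of \<zeta>] norm_ge_zero order_trans by blast
  have Cauchy: "norm ((deriv ^^ j) (polysum N b) w) \<le> fact j * B / r ^ j" for j
    using r B by (intro Cauchy_inequality holomorphic_on_polysum
        holomorphic_on_imp_continuous_on) (auto simp: norm_minus_commute)
  have term_le: "norm ((deriv ^^ j) (polysum N b) w / fact j * (z - w) ^ j) \<le> B * T ^ N"
    if "j < N" for j
  proof -
    have "norm ((deriv ^^ j) (polysum N b) w / fact j * (z - w) ^ j)
        \<le> (fact j * B / r ^ j) / fact j * norm (z - w) ^ j"
      unfolding norm_mult norm_divide norm_power norm_fact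
      by (intro mult_right_mono divide_right_mono Cauchy) auto
    also have "\<dots> = B * (norm (z - w) / r) ^ j" by (simp add: power_divide)
    also have "\<dots> \<le> B * T ^ j"
      using B0 r by (intro mult_left_mono power_mono) (auto simp: T_def)
    also have "\<dots> \<le> B * T ^ N"
      using B0 \<open>T \<ge> 1\<close> that by (intro mult_left_mono power_increasing) auto
    finally show ?thesis .
  qed
  have "norm (polysum N b z) \<le> (\<Sum>j<N. norm ((deriv ^^ j) (polysum N b) w / fact j * (z - w) ^ j))"
    by (subst polysum_Taylor[of N b z w]) (rule norm_sum)
  also have "\<dots> \<le> (\<Sum>j<N. B * T ^ N)"
    by (rule sum_mono) (use term_le in auto)
  finally show ?thesis by (simp add: T_def)
qed

definition exp_poly :: "complex \<Rightarrow> nat \<Rightarrow> (nat \<Rightarrow> complex) \<Rightarrow> complex \<Rightarrow> complex" where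
  "exp_poly l N b z = polysum N b z * exp (l * z)"

definition exp_poly_deriv_coeff :: "complex \<Rightarrow> nat \<Rightarrow> (nat \<Rightarrow> complex) \<Rightarrow> nat \<Rightarrow> complex" where
  "exp_poly_deriv_coeff l N b k = l * b k + (if Suc k < N then of_nat (Suc k) * b (Suc k) else 0)"

lemma has_field_derivative_exp_poly:
  "(exp_poly l N b has_field_derivative exp_poly l N (exp_poly_deriv_coeff l N b) z) (at z)"
proof -
  have "(exp_poly l N b has_field_derivative
      (polysum (N - 1) (\<lambda>k. of_nat (Suc k) * b (Suc k)) z + l * polysum N b z) * exp (l * z)) (at z)"
    unfolding exp_poly_def[abs_def]
    by (auto intro!: derivative_eq_intros has_field_derivative_polysum simp: algebra_simps)
  moreover have "polysum (N - 1) (\<lambda>k. of_nat (Suc k) * b (Suc k)) z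
      = polysum N (\<lambda>k. if Suc k < N then of_nat (Suc k) * b (Suc k) else 0) z"
    by (cases N) (simp_all add: polysum_Suc polysum_def)
  moreover have "polysum N (\<lambda>k. if Suc k < N then of_nat (Suc k) * b (Suc k) else 0) z + l * polysum N b z
      = polysum N (exp_poly_deriv_coeff l N b) z"
    by (simp add: polysum_def exp_poly_deriv_coeff_def sum.distrib sum_distrib_left algebra_simps)
  ultimately show ?thesis by (simp add: exp_poly_def)
qed

lemma continuous_on_exp_poly: "continuous_on S (exp_poly l N b)"
  unfolding exp_poly_def[abs_def] polysum_def by (intro continuous_intros)

lemma cos_mult_norm_le_Re:
  assumes "\<bar>Arg l\<bar> \<le> \<theta>" "\<theta> < pi / 2"
  shows "cos \<theta> * norm l \<le> Re l"
proof (cases "l = 0")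
  case False
  have "cos \<theta> \<le> cos \<bar>Arg l\<bar>"
    using assms by (intro cos_monotone_0_pi_le) auto
  also have "cos \<bar>Arg l\<bar> = Re l / norm l"
    using cos_Arg[OF False] by (simp add: abs_if)
  finally show ?thesis using False by (simp add: pos_le_divide_eq)
qed simp

lemma Re_mult_ge_near_real:
  assumes "\<bar>Arg l\<bar> \<le> \<theta>" "\<theta> < pi / 2" "0 \<le> x" "norm (\<zeta> - of_real x) < 1"
  shows "(x * cos \<theta> - 1) * norm l \<le> Re (l * \<zeta>)"
proof -
  have "norm (l * (\<zeta> - of_real x)) \<le> norm l"
    using assms(4) mult_left_le[of "norm (\<zeta> - of_real x)" "norm l"] by (simp add: norm_mult)
  then have "- norm l \<le> Re (l * (\<zeta> - of_real x))"
    using abs_Re_le_cmod[of "l * (\<zeta> - of_real x)"] by linarith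
  moreover have "x * (cos \<theta> * norm l) \<le> x * Re l"
    using assms cos_mult_norm_le_Re by (intro mult_left_mono) auto
  moreover have "Re (l * \<zeta>) = x * Re l + Re (l * (\<zeta> - of_real x))"
    by (simp add: algebra_simps)
  moreover have "(x * cos \<theta> - 1) * norm l = x * (cos \<theta> * norm l) - norm l"
    by (simp add: algebra_simps)
  ultimately show ?thesis by linarith
qed

lemma mult_power_mult_exp_le:
  fixes x T :: real
  assumes "0 < x" "1 \<le> T" "real n * (2 + 2 * ln T) \<le> x"
  shows "real n * T ^ n * exp (- 2 * x) \<le> real n / x"
proof (cases "n = 0")
  case False
  have "0 \<le> real n * ln T" using assms by simp
  then have n: "real n \<le> x / 2" and n_ln: "real n * ln T \<le> x / 2"
    using assms(3) by (auto simp: algebra_simps)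
  have "T ^ n = exp (real n * ln T)"
    using assms by (simp add: exp_of_nat_mult)
  also have "\<dots> \<le> exp (x / 2)" using n_ln by simp
  finally have "T ^ n \<le> exp (x / 2)" .
  moreover have "x / 2 \<le> exp (x / 2)" using exp_ge_add_one_self[of "x / 2"] by linarith
  ultimately have "real n * T ^ n * exp (- 2 * x) \<le> exp (x / 2) * exp (x / 2) * exp (- 2 * x)"
    using n assms(2) by (intro mult_right_mono mult_mono) auto
  also have "\<dots> = inverse (exp x)" by (simp flip: exp_add exp_minus)
  also have "\<dots> \<le> 1 / x"
  proof -
    have "x \<le> exp x" using exp_ge_add_one_self[of x] by linarith
    then show ?thesis using assms(1) by (simp add: field_simps)
  qed
  also have "\<dots> \<le> real n / x"
    using False assms(1) by (simp add: divide_right_mono)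
  finally show ?thesis .
qed simp

lemma pointwise_bounded_imp_bounded_on_ball:
  fixes G :: "nat \<Rightarrow> 'a::heine_borel \<Rightarrow> 'b::real_normed_vector"
  assumes cont: "\<And>n. continuous_on UNIV (G n)"
    and bounded: "\<And>z. bounded (range (\<lambda>n. G n z))"
    and U: "open U" "U \<noteq> {}"
  obtains w \<rho> M where "ball w \<rho> \<subseteq> U" "0 < \<rho>" "\<And>\<zeta> n. \<zeta> \<in> ball w \<rho> \<Longrightarrow> norm (G n \<zeta>) \<le> M"
proof -
  define F where "F M = {\<zeta>. \<forall>n. norm (G n \<zeta>) \<le> real M}" for M :: nat
  have "closed (F M)" for M
    unfolding F_def Collect_all_eq
    by (intro closed_INT ballI closed_Collect_le continuous_on_norm cont continuous_on_const)
  then have closedin_F: "closedin (top_of_set U) (U \<inter> F M)" for M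
    by (rule closedin_closed_Int)
  have "\<exists>M. \<zeta> \<in> F M" for \<zeta>
  proof -
    obtain K where "\<forall>n. norm (G n \<zeta>) \<le> K"
      using bounded[of \<zeta>] by (auto simp: bounded_iff)
    then have "\<forall>n. norm (G n \<zeta>) \<le> real (nat \<lceil>K\<rceil>)"
      by (meson order_trans real_nat_ceiling_ge)
    then show ?thesis unfolding F_def by blast
  qed
  then have cover: "(\<Union>M. U \<inter> F M) = U" by blast
  have space: "locally_compact_space (top_of_set U) \<and> regular_space (top_of_set U)"
    using U by (simp add: locally_compact_space_open_subset locally_compact_space_euclidean
        regular_space_euclidean regular_space_subtopology)
  have "\<exists>M. top_of_set U interior_of (U \<inter> F M) \<noteq> {}"
  proof (rule ccontr)
    assume "\<nexists>M. top_of_set U interior_of (U \<inter> F M) \<noteq> {}"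
    then have "top_of_set U interior_of (\<Union>M. U \<inter> F M) = {}"
      using space closedin_F by (intro Baire_category_alt) auto
    moreover have "top_of_set U interior_of U = U"
      using interior_of_topspace[of "top_of_set U"] by simp
    ultimately show False using cover U by simp
  qed
  then obtain M V y where V: "openin (top_of_set U) V" "y \<in> V" "V \<subseteq> U \<inter> F M"
    by (auto simp: interior_of_def)
  then have "open V" using U openin_open_trans by blast
  then obtain \<rho> where "0 < \<rho>" "ball y \<rho> \<subseteq> V" using V(2) open_contains_ball by blast
  with V(3) have "ball y \<rho> \<subseteq> U" "ball y \<rho> \<subseteq> F M" by auto
  with \<open>0 < \<rho>\<close> show thesis by (intro that[of y \<rho> "real M"]) (auto simp: F_def subset_iff)
qed

lemma summable_majorant_on_compact:
  fixes G :: "nat \<Rightarrow> 'a::metric_space \<Rightarrow> 'b::real_normed_vector"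
  assumes "compact K" "\<And>n. continuous_on K (G n)" "summable h"
    and "\<forall>\<^sub>F n in sequentially. \<forall>z\<in>K. norm (G n z) \<le> h n"
  obtains h' where "summable h'" "\<And>n z. z \<in> K \<Longrightarrow> norm (G n z) \<le> h' n"
proof -
  obtain N where N: "\<And>n z. N \<le> n \<Longrightarrow> z \<in> K \<Longrightarrow> norm (G n z) \<le> h n"
    using assms(4) unfolding eventually_sequentially by blast
  have "\<exists>B. \<forall>z\<in>K. norm (G n z) \<le> B" for n
    using compact_imp_bounded[OF compact_continuous_image[OF assms(2,1)]] by (auto simp: bounded_iff)
  then obtain B where B: "\<And>n z. z \<in> K \<Longrightarrow> norm (G n z) \<le> B n" by metis
  define h' where "h' n = (if n < N then B n else h n)" for n
  have "\<forall>\<^sub>F n in sequentially. h' n = h n"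
    unfolding eventually_sequentially h'_def by (intro exI[of _ N]) auto
  then have "summable h'" using assms(3) summable_cong by blast
  moreover have "norm (G n z) \<le> h' n" if "z \<in> K" for n z
    using B[OF that] N[OF _ that] by (auto simp: h'_def)
  ultimately show thesis by (rule that)
qed

lemma in_L2_imp_absolutely_integrable:
  assumes "in_L2 a b g"
  shows "g absolutely_integrable_on {a..b}"
proof (rule measurable_bounded_by_integrable_imp_absolutely_integrable)
  show "g \<in> borel_measurable (lebesgue_on {a..b})"
    using assms unfolding in_L2_def by (intro measurable_on_imp_borel_measurable_lebesgue) auto
  show "(\<lambda>x. 1 + (norm (g x))\<^sup>2) integrable_on {a..b}"
    using assms unfolding in_L2_def by (intro integrable_add) auto
  show "norm (g x) \<le> 1 + (norm (g x))\<^sup>2" for x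
  proof -
    have "2 * norm (g x) \<le> 1 + (norm (g x))\<^sup>2"
      using sum_squares_bound[of 1 "norm (g x)"] by (simp add: power2_eq_square)
    then show ?thesis using norm_ge_zero[of "g x"] by linarith
  qed
qed simp

lemma in_L2_imp_cnj_absolutely_integrable:
  "in_L2 a b g \<Longrightarrow> (\<lambda>x. cnj (g x)) absolutely_integrable_on {a..b}"
  using in_L2_imp_absolutely_integrable by (simp add: absolutely_integrable_on_def integrable_on_cnj_iff)

lemma absolutely_integrable_continuous_mult:
  fixes F g :: "real \<Rightarrow> complex"
  assumes "continuous_on {a..b} F" "g absolutely_integrable_on {a..b}"
  shows "(\<lambda>x. F x * g x) absolutely_integrable_on {a..b}"
  using assms
  by (intro absolutely_integrable_bounded_measurable_product[OF bilinear_times]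
      continuous_imp_measurable_on_sets_lebesgue compact_imp_bounded compact_continuous_image) auto

lemma integral_mult_sums:
  fixes g :: "nat \<Rightarrow> real \<Rightarrow> complex" and \<phi> :: "real \<Rightarrow> complex"
  assumes sums: "\<And>x. x \<in> {a..b} \<Longrightarrow> (\<lambda>n. g n x) sums G x"
    and cont: "\<And>n. continuous_on {a..b} (g n)"
    and "summable h" and h: "\<And>n x. x \<in> {a..b} \<Longrightarrow> norm (g n x) \<le> h n"
    and "a \<le> b" and \<phi>: "\<phi> absolutely_integrable_on {a..b}"
  shows "(\<lambda>n. integral {a..b} (\<lambda>x. g n x * \<phi> x)) sums integral {a..b} (\<lambda>x. G x * \<phi> x)"
proof -
  have h_nonneg: "0 \<le> h n" for n
    using order_trans[OF norm_ge_zero h[of a n]] \<open>a \<le> b\<close> by simp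
  have partial_le: "norm (\<Sum>j<N. g j x) \<le> suminf h" if "x \<in> {a..b}" for N x
  proof -
    have "norm (\<Sum>j<N. g j x) \<le> (\<Sum>j<N. h j)"
      using h[OF that] by (intro order_trans[OF norm_sum] sum_mono)
    also have "\<dots> \<le> suminf h"
      using \<open>summable h\<close> h_nonneg by (intro sum_le_suminf) auto
    finally show ?thesis .
  qed
  have "continuous_on {a..b} (\<lambda>x. \<Sum>j<N. g j x)" for N
    by (intro continuous_on_sum cont)
  then have integrable: "(\<lambda>x. (\<Sum>j<N. g j x) * \<phi> x) integrable_on {a..b}" for N
    using absolutely_integrable_continuous_mult[OF _ \<phi>] by (simp add: absolutely_integrable_on_def)
  have "(\<lambda>N. integral {a..b} (\<lambda>x. (\<Sum>j<N. g j x) * \<phi> x)) \<longlonglongrightarrow> integral {a..b} (\<lambda>x. G x * \<phi> x)"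
  proof (rule dominated_convergence(2)[OF integrable])
    show "(\<lambda>x. suminf h * norm (\<phi> x)) integrable_on {a..b}"
      using \<phi> by (intro integrable_on_mult_right) (simp add: absolutely_integrable_on_def)
    show "norm ((\<Sum>j<N. g j x) * \<phi> x) \<le> suminf h * norm (\<phi> x)" if "x \<in> {a..b}" for N x
      unfolding norm_mult using partial_le[OF that] by (intro mult_right_mono) auto
    show "(\<lambda>N. (\<Sum>j<N. g j x) * \<phi> x) \<longlonglongrightarrow> G x * \<phi> x" if "x \<in> {a..b}" for x
      using sums[OF that] unfolding sums_def by (rule tendsto_mult_right)
  qed
  moreover have "integral {a..b} (\<lambda>x. (\<Sum>j<N. g j x) * \<phi> x) = (\<Sum>j<N. integral {a..b} (\<lambda>x. g j x * \<phi> x))" for N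
    using absolutely_integrable_continuous_mult[OF cont \<phi>]
    by (simp add: sum_distrib_right absolutely_integrable_on_def integral_sum)
  ultimately show ?thesis unfolding sums_def by simp
qed

lemma integral_exp_poly_mult_cnj_biorthogonal:
  assumes biorth: "biorthogonal_to_E \<gamma> \<beta> lam mu r" and "in_L2 \<gamma> \<beta> (r n k)" and "k < mu n"
  shows "integral {\<gamma>..\<beta>} (\<lambda>x. exp_poly (lam j) (mu j) b (of_real x) * cnj (r n k x))
    = (if j = n then b k else 0)"
proof -
  have cnj_r: "(\<lambda>x. cnj (r n k x)) absolutely_integrable_on {\<gamma>..\<beta>}"
    using assms(2) by (rule in_L2_imp_cnj_absolutely_integrable)
  have "continuous_on {\<gamma>..\<beta>} (exp_monomial lam j l)" for l
    unfolding exp_monomial_def[abs_def] by (intro continuous_intros)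
  then have integrable: "(\<lambda>x. exp_monomial lam j l x * cnj (r n k x)) integrable_on {\<gamma>..\<beta>}" for l
    using absolutely_integrable_continuous_mult[OF _ cnj_r] by (simp add: absolutely_integrable_on_def)
  have inner: "integral {\<gamma>..\<beta>} (\<lambda>x. exp_monomial lam j l x * cnj (r n k x))
      = (if (j, l) = (n, k) then 1 else 0)" if "l < mu j" for l
  proof -
    have "integral {\<gamma>..\<beta>} (\<lambda>x. exp_monomial lam j l x * cnj (r n k x))
        = cnj (L2_inner \<gamma> \<beta> (r n k) (exp_monomial lam j l))"
      by (simp add: L2_inner_def integral_cnj mult.commute)
    then show ?thesis using biorth that \<open>k < mu n\<close> by (simp add: biorthogonal_to_E_def)
  qed
  have "exp_poly (lam j) (mu j) b (of_real x) = (\<Sum>l<mu j. b l * exp_monomial lam j l x)" for x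
    unfolding exp_poly_def polysum_def exp_monomial_def sum_distrib_right by (simp add: mult_ac)
  then have "integral {\<gamma>..\<beta>} (\<lambda>x. exp_poly (lam j) (mu j) b (of_real x) * cnj (r n k x))
      = integral {\<gamma>..\<beta>} (\<lambda>x. \<Sum>l<mu j. b l * (exp_monomial lam j l x * cnj (r n k x)))"
    by (simp add: sum_distrib_right mult.assoc)
  also have "\<dots> = (\<Sum>l<mu j. b l * integral {\<gamma>..\<beta>} (\<lambda>x. exp_monomial lam j l x * cnj (r n k x)))"
    by (subst integral_sum) (auto intro: integrable_on_mult_right integrable)
  also have "\<dots> = (\<Sum>l<mu j. if (j, l) = (n, k) then b l else 0)"
    by (intro sum.cong) (auto simp: inner)
  also have "\<dots> = (if j = n then b k else 0)"
    using \<open>k < mu n\<close> by auto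
  finally show ?thesis .
qed

locale sectorial_exponents =
  fixes lam :: "nat \<Rightarrow> complex" and mu :: "nat \<Rightarrow> nat" and \<theta> :: real
  assumes Arg_le: "\<And>n. \<bar>Arg (lam n)\<bar> \<le> \<theta>"
    and angle_less: "\<theta> < pi / 2"
    and lam_nonzero: "\<And>n. lam n \<noteq> 0"
    and summable_mu_div_norm: "summable (\<lambda>n. real (mu n) / norm (lam n))"
begin

lemma cos_angle_pos: "0 < cos \<theta>"
  using Arg_le[of 0] angle_less by (intro cos_gt_zero_pi) auto

(* Baire's theorem supplies a disc near the real point x0 = (rho + 3) / cos theta, chosen so that
   Re (lam_n zeta) >= (rho + 2) |lam_n| there. *)
lemma polysum_bound_on_circle_near_real_axis:
  assumes bounded: "\<And>z. bounded (range (\<lambda>n. exp_poly (lam n) (mu n) (d n) z))" and "0 \<le> \<rho>"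
  obtains w r M where "norm w \<le> (\<rho> + 3) / cos \<theta> + 1" "0 < r" "0 \<le> M"
    "\<And>n \<zeta>. norm (\<zeta> - w) = r \<Longrightarrow> norm (polysum (mu n) (d n) \<zeta>) \<le> M * exp (- (\<rho> + 2) * norm (lam n))"
proof -
  define x0 where "x0 = (\<rho> + 3) / cos \<theta>"
  have "0 \<le> x0" and x0: "x0 * cos \<theta> = \<rho> + 3"
    using cos_angle_pos \<open>0 \<le> \<rho>\<close> by (auto simp: x0_def)
  have "ball (of_real x0) 1 \<noteq> {}" by simp
  then obtain w \<rho>0 M where ball: "ball w \<rho>0 \<subseteq> ball (of_real x0) 1" and "0 < \<rho>0"
    and M: "\<And>\<zeta> n. \<zeta> \<in> ball w \<rho>0 \<Longrightarrow> norm (exp_poly (lam n) (mu n) (d n) \<zeta>) \<le> M"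
    by (rule pointwise_bounded_imp_bounded_on_ball[OF continuous_on_exp_poly bounded open_ball]) blast
  have "w \<in> ball w \<rho>0" using \<open>0 < \<rho>0\<close> by simp
  then have "0 \<le> M" using order_trans[OF norm_ge_zero M] by blast
  have "w \<in> ball (of_real x0) 1" using ball \<open>w \<in> ball w \<rho>0\<close> by blast
  then have "norm w \<le> x0 + 1"
    using norm_triangle_sub[of w "of_real x0"] \<open>0 \<le> x0\<close> by (simp add: dist_norm norm_minus_commute)
  moreover have "norm (polysum (mu n) (d n) \<zeta>) \<le> M * exp (- (\<rho> + 2) * norm (lam n))"
    if "norm (\<zeta> - w) = \<rho>0 / 2" for n \<zeta>
  proof -
    have "\<zeta> \<in> ball w \<rho>0" using that \<open>0 < \<rho>0\<close> by (simp add: dist_norm norm_minus_commute)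
    then have bound: "norm (exp_poly (lam n) (mu n) (d n) \<zeta>) \<le> M"
      and "norm (\<zeta> - of_real x0) < 1"
      using M subsetD[OF ball] by (auto simp: dist_norm norm_minus_commute)
    then have "(x0 * cos \<theta> - 1) * norm (lam n) \<le> Re (lam n * \<zeta>)"
      by (intro Re_mult_ge_near_real[OF Arg_le angle_less \<open>0 \<le> x0\<close>])
    then have "(\<rho> + 2) * norm (lam n) \<le> Re (lam n * \<zeta>)"
      using x0 by (simp add: add.commute)
    have "norm (exp_poly (lam n) (mu n) (d n) \<zeta>) = norm (polysum (mu n) (d n) \<zeta>) * exp (Re (lam n * \<zeta>))"
      by (simp add: exp_poly_def norm_mult norm_exp_eq_Re)
    then have "norm (polysum (mu n) (d n) \<zeta>) = norm (exp_poly (lam n) (mu n) (d n) \<zeta>) * exp (- Re (lam n * \<zeta>))"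
      by (simp add: mult.assoc flip: exp_add)
    also have "\<dots> \<le> M * exp (- (\<rho> + 2) * norm (lam n))"
    proof (rule mult_mono)
      show "exp (- Re (lam n * \<zeta>)) \<le> exp (- (\<rho> + 2) * norm (lam n))"
        using \<open>(\<rho> + 2) * norm (lam n) \<le> Re (lam n * \<zeta>)\<close>
        by (simp only: exp_le_cancel_iff mult_minus_left neg_le_iff_le)
    qed (use bound \<open>0 \<le> M\<close> in auto)
    finally show ?thesis .
  qed
  ultimately show thesis
    using \<open>0 < \<rho>0\<close> \<open>0 \<le> M\<close> by (intro that[of w "\<rho>0 / 2" M]) (auto simp: x0_def)
qed

lemma exp_poly_bound_on_disc:
  assumes "\<And>z. bounded (range (\<lambda>n. exp_poly (lam n) (mu n) (d n) z))" "0 \<le> \<rho>"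
  obtains M T where "0 \<le> M" "1 \<le> T" "\<And>n z. z \<in> cball 0 \<rho> \<Longrightarrow>
    norm (exp_poly (lam n) (mu n) (d n) z) \<le> M * (real (mu n) * T ^ mu n * exp (- 2 * norm (lam n)))"
proof -
  obtain w r M where w: "norm w \<le> (\<rho> + 3) / cos \<theta> + 1" and "0 < r" "0 \<le> M"
    and circle: "\<And>n \<zeta>. norm (\<zeta> - w) = r \<Longrightarrow> norm (polysum (mu n) (d n) \<zeta>) \<le> M * exp (- (\<rho> + 2) * norm (lam n))"
    by (rule polysum_bound_on_circle_near_real_axis[OF assms]) blast
  define T where "T = 1 + (\<rho> + (\<rho> + 3) / cos \<theta> + 1) / r"
  have "1 \<le> T"
    using \<open>0 < r\<close> \<open>0 \<le> \<rho>\<close> cos_angle_pos by (simp add: T_def)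
  moreover have "norm (exp_poly (lam n) (mu n) (d n) z) \<le> M * (real (mu n) * T ^ mu n * exp (- 2 * norm (lam n)))"
    if "z \<in> cball 0 \<rho>" for n z
  proof -
    have "norm (z - w) \<le> \<rho> + (\<rho> + 3) / cos \<theta> + 1"
      using norm_triangle_ineq4[of z w] that w by simp
    then have "(1 + norm (z - w) / r) ^ mu n \<le> T ^ mu n"
      using \<open>0 < r\<close> by (intro power_mono) (auto simp: T_def divide_right_mono)
    moreover have "norm (polysum (mu n) (d n) z)
        \<le> real (mu n) * (M * exp (- (\<rho> + 2) * norm (lam n))) * (1 + norm (z - w) / r) ^ mu n"
      by (rule norm_polysum_le_circle_bound[OF \<open>0 < r\<close> circle])
    ultimately have "norm (polysum (mu n) (d n) z) \<le> real (mu n) * (M * exp (- (\<rho> + 2) * norm (lam n))) * T ^ mu n"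
      using \<open>0 \<le> M\<close> by (elim order_trans) (intro mult_left_mono, auto)
    moreover have "norm (exp (lam n * z)) \<le> exp (\<rho> * norm (lam n))"
      using complex_Re_le_cmod[of "lam n * z"] mult_left_mono[of "norm z" \<rho> "norm (lam n)"] that
      by (simp add: norm_mult mult.commute)
    ultimately have "norm (exp_poly (lam n) (mu n) (d n) z)
        \<le> real (mu n) * (M * exp (- (\<rho> + 2) * norm (lam n))) * T ^ mu n * exp (\<rho> * norm (lam n))"
      unfolding exp_poly_def norm_mult using \<open>0 \<le> M\<close> \<open>1 \<le> T\<close> by (intro mult_mono) auto
    also have "\<dots> = M * (real (mu n) * T ^ mu n * exp (- 2 * norm (lam n)))"
      by (simp add: algebra_simps flip: exp_add)
    finally show ?thesis .
  qed
  ultimately show thesis using \<open>0 \<le> M\<close> that by blast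
qed

lemma exp_poly_eventual_summable_majorant:
  assumes "\<And>z. bounded (range (\<lambda>n. exp_poly (lam n) (mu n) (d n) z))" "0 \<le> \<rho>"
  obtains h where "summable h"
    "\<forall>\<^sub>F n in sequentially. \<forall>z\<in>cball 0 \<rho>. norm (exp_poly (lam n) (mu n) (d n) z) \<le> h n"
proof -
  obtain M T where "0 \<le> M" "1 \<le> T" and bound: "\<And>n z. z \<in> cball 0 \<rho> \<Longrightarrow>
      norm (exp_poly (lam n) (mu n) (d n) z) \<le> M * (real (mu n) * T ^ mu n * exp (- 2 * norm (lam n)))"
    by (rule exp_poly_bound_on_disc[OF assms]) blast
  have "0 < 2 + 2 * ln T" using ln_ge_zero[OF \<open>1 \<le> T\<close>] by linarith
  have "(\<lambda>n. real (mu n) / norm (lam n)) \<longlonglongrightarrow> 0"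
    using summable_mu_div_norm by (rule summable_LIMSEQ_zero)
  then have "\<forall>\<^sub>F n in sequentially. real (mu n) / norm (lam n) < 1 / (2 + 2 * ln T)"
    using \<open>0 < 2 + 2 * ln T\<close> by (intro order_tendstoD) auto
  then have "\<forall>\<^sub>F n in sequentially.
      real (mu n) * T ^ mu n * exp (- 2 * norm (lam n)) \<le> real (mu n) / norm (lam n)"
  proof eventually_elim
    case (elim n)
    have "0 < norm (lam n)" using lam_nonzero by simp
    with elim \<open>0 < 2 + 2 * ln T\<close> have "real (mu n) * (2 + 2 * ln T) < norm (lam n)"
      by (simp add: field_simps)
    then show ?case
      using mult_power_mult_exp_le \<open>0 < norm (lam n)\<close> \<open>1 \<le> T\<close> less_imp_le by blast
  qed
  then have "\<forall>\<^sub>F n in sequentially. \<forall>z\<in>cball 0 \<rho>.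
      norm (exp_poly (lam n) (mu n) (d n) z) \<le> M * (real (mu n) / norm (lam n))"
  proof eventually_elim
    case (elim n)
    show ?case using order_trans[OF bound mult_left_mono[OF elim \<open>0 \<le> M\<close>]] by blast
  qed
  with summable_mult[OF summable_mu_div_norm] show thesis by (rule that)
qed

lemma exp_poly_summable_majorant:
  assumes "\<And>z. bounded (range (\<lambda>n. exp_poly (lam n) (mu n) (d n) z))" "0 \<le> \<rho>"
  obtains h where "summable h"
    "\<And>n z. z \<in> cball 0 \<rho> \<Longrightarrow> norm (exp_poly (lam n) (mu n) (d n) z) \<le> h n"
proof -
  obtain h where "summable h"
    and "\<forall>\<^sub>F n in sequentially. \<forall>z\<in>cball 0 \<rho>. norm (exp_poly (lam n) (mu n) (d n) z) \<le> h n"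
    by (rule exp_poly_eventual_summable_majorant[OF assms]) blast
  then show thesis
    by (rule summable_majorant_on_compact[OF compact_cball continuous_on_exp_poly]) (rule that)
qed

lemma exp_poly_series_deriv:
  assumes sums: "\<And>z. (\<lambda>n. exp_poly (lam n) (mu n) (d n) z) sums F z"
  shows "(\<lambda>n. exp_poly (lam n) (mu n) (exp_poly_deriv_coeff (lam n) (mu n) (d n)) z) sums deriv F z"
proof -
  have bounded: "bounded (range (\<lambda>n. exp_poly (lam n) (mu n) (d n) w))" for w
    using sums by (intro summable_imp_bounded sums_summable)
  define \<rho> where "\<rho> = norm z + 1"
  have "0 \<le> \<rho>" and z: "z \<in> ball 0 \<rho>" by (simp_all add: \<rho>_def)
  obtain h where "summable h"
    and "\<forall>\<^sub>F n in sequentially. \<forall>w\<in>cball 0 \<rho>. norm (exp_poly (lam n) (mu n) (d n) w) \<le> h n"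
    by (rule exp_poly_eventual_summable_majorant[OF bounded \<open>0 \<le> \<rho>\<close>]) blast
  then have ev: "\<forall>\<^sub>F n in sequentially. \<forall>w\<in>ball 0 \<rho>. norm (exp_poly (lam n) (mu n) (d n) w) \<le> h n"
    by (elim eventually_mono) auto
  have "(exp_poly (lam n) (mu n) (d n) has_field_derivative
      exp_poly (lam n) (mu n) (exp_poly_deriv_coeff (lam n) (mu n) (d n)) w) (at w)"
    if "w \<in> ball 0 \<rho>" for n w
    by (rule has_field_derivative_exp_poly)
  from series_and_derivative_comparison[OF open_ball \<open>summable h\<close> this ev]
  obtain G G' where G: "\<forall>w\<in>ball 0 \<rho>. ((\<lambda>n. exp_poly (lam n) (mu n) (d n) w) sums G w)
      \<and> ((\<lambda>n. exp_poly (lam n) (mu n) (exp_poly_deriv_coeff (lam n) (mu n) (d n)) w) sums G' w)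
      \<and> (G has_field_derivative G' w) (at w)"
    by blast
  have G_eq_F: "G w = F w" if "w \<in> ball 0 \<rho>" for w
  proof -
    have "(\<lambda>n. exp_poly (lam n) (mu n) (d n) w) sums G w" using G that by blast
    then show ?thesis using sums by (rule sums_unique2)
  qed
  have "(G has_field_derivative G' z) (at z)" using G z by blast
  then have "(F has_field_derivative G' z) (at z)"
    using G_eq_F by (rule has_field_derivative_transform_within_open[OF _ open_ball z])
  then have "deriv F z = G' z" by (rule DERIV_imp_deriv)
  with G z show ?thesis by simp
qed

lemma exp_poly_series_coeff_eq_L2_inner:
  assumes sums: "\<And>z. (\<lambda>n. exp_poly (lam n) (mu n) (d n) z) sums F z"
    and "\<gamma> \<le> \<beta>" and biorth: "biorthogonal_to_E \<gamma> \<beta> lam mu r"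
    and r_L2: "in_L2 \<gamma> \<beta> (r n k)" and "k < mu n"
  shows "L2_inner \<gamma> \<beta> (\<lambda>x. F (of_real x)) (r n k) = d n k"
proof -
  have bounded: "bounded (range (\<lambda>n. exp_poly (lam n) (mu n) (d n) w))" for w
    using sums by (intro summable_imp_bounded sums_summable)
  define \<rho> where "\<rho> = max \<bar>\<gamma>\<bar> \<bar>\<beta>\<bar>"
  have "0 \<le> \<rho>" by (simp add: \<rho>_def)
  obtain h where "summable h"
    and h: "\<And>j z. z \<in> cball 0 \<rho> \<Longrightarrow> norm (exp_poly (lam j) (mu j) (d j) z) \<le> h j"
    by (rule exp_poly_summable_majorant[OF bounded \<open>0 \<le> \<rho>\<close>]) blast
  have "(\<lambda>j. integral {\<gamma>..\<beta>} (\<lambda>x. exp_poly (lam j) (mu j) (d j) (of_real x) * cnj (r n k x)))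
      sums integral {\<gamma>..\<beta>} (\<lambda>x. F (of_real x) * cnj (r n k x))"
  proof (rule integral_mult_sums[OF _ _ \<open>summable h\<close> _ \<open>\<gamma> \<le> \<beta>\<close>])
    show "continuous_on {\<gamma>..\<beta>} (\<lambda>x. exp_poly (lam j) (mu j) (d j) (of_real x))" for j
      by (intro continuous_on_compose2[OF continuous_on_exp_poly[of UNIV]] continuous_intros) auto
    show "norm (exp_poly (lam j) (mu j) (d j) (of_real x)) \<le> h j" if "x \<in> {\<gamma>..\<beta>}" for j x
      using h that by (auto simp: \<rho>_def)
  qed (use sums in_L2_imp_cnj_absolutely_integrable[OF r_L2] in auto)
  moreover have "integral {\<gamma>..\<beta>} (\<lambda>x. exp_poly (lam j) (mu j) (d j) (of_real x) * cnj (r n k x))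
      = (if j = n then d n k else 0)" for j
    using integral_exp_poly_mult_cnj_biorthogonal[OF biorth r_L2 \<open>k < mu n\<close>] by auto
  ultimately have "(\<lambda>j. if j = n then d n k else 0) sums L2_inner \<gamma> \<beta> (\<lambda>x. F (of_real x)) (r n k)"
    by (simp add: L2_inner_def)
  then show ?thesis by (rule sums_unique2[OF sums_single, symmetric])
qed

end

theorem corollary1p1:
  fixes lam :: "nat \<Rightarrow> complex" and mu :: "nat \<Rightarrow> nat"
    and \<gamma> \<beta> :: real
    and r :: "nat \<Rightarrow> nat \<Rightarrow> real \<Rightarrow> complex"
    and f :: "complex \<Rightarrow> complex"
    and c :: "nat \<Rightarrow> nat \<Rightarrow> complex"
  assumes ABC: "class_ABC lam mu"
    and interval: "\<gamma> < \<beta>"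
    and r_span: "\<forall>n k. k < mu n \<longrightarrow> in_closed_span_E \<gamma> \<beta> lam mu (r n k)"
    and r_biorth: "biorthogonal_to_E \<gamma> \<beta> lam mu r"
    and f_entire: "f holomorphic_on UNIV"
    and f_series: "\<forall>z. (\<lambda>n. (\<Sum>k<mu n. c n k * z ^ k) * exp (lam n * z)) sums f z"
  shows "\<forall>m::nat. \<forall>z. (\<lambda>n. (\<Sum>k<mu n. L2_inner \<gamma> \<beta> (\<lambda>x. (deriv ^^ m) f (complex_of_real x)) (r n k) * z ^ k)
                              * exp (lam n * z)) sums ((deriv ^^ m) f z)"
proof -
  obtain \<theta> where "sectorial_exponents lam mu \<theta>"
    using ABC unfolding class_ABC_def multiplicity_seq_def sectorial_exponents_def by blast
  then interpret sectorial_exponents lam mu \<theta> .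
  define D where "D m n = (exp_poly_deriv_coeff (lam n) (mu n) ^^ m) (c n)" for m n
  have series: "(\<lambda>n. exp_poly (lam n) (mu n) (D m n) z) sums (deriv ^^ m) f z" for m z
  proof (induction m arbitrary: z)
    case 0
    show ?case using f_series by (simp add: D_def exp_poly_def polysum_def)
  next
    case (Suc m)
    have "(\<lambda>n. exp_poly (lam n) (mu n) (exp_poly_deriv_coeff (lam n) (mu n) (D m n)) z)
        sums deriv ((deriv ^^ m) f) z"
      by (rule exp_poly_series_deriv) (rule Suc)
    then show ?case by (simp add: D_def)
  qed
  have "L2_inner \<gamma> \<beta> (\<lambda>x. (deriv ^^ m) f (of_real x)) (r n k) = D m n k" if "k < mu n" for m n k
    using exp_poly_series_coeff_eq_L2_inner[OF series _ r_biorth _ that] interval r_span that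
    by (simp add: in_closed_span_E_def)
  then have "(\<Sum>k<mu n. L2_inner \<gamma> \<beta> (\<lambda>x. (deriv ^^ m) f (of_real x)) (r n k) * z ^ k)
      = polysum (mu n) (D m n) z" for m n z
    unfolding polysum_def by (intro sum.cong) auto
  then show ?thesis using series by (simp add: exp_poly_def)
qed

end
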